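(* Let $p\ge 7$ be a prime. Then $$\sum_{k=1}^{p-1}\frac{H_k H_{k,2}}{k}\equiv -\frac{3}{2}\sum_{k=1}^{p-1}\frac{H_k^2}{k^2}\pmod{p}.$$
   Context: For positive integers $n,m$, $H_{n,m}=\sum_{k=1}^n 1/k^m$ and $H_n=H_{n,1}$. Congruences modulo $p$ are taken in the ring of rationals with denominators not divisible by $p$. *)

theory Defs
  imports "HOL-Number_Theory.Number_Theory"
begin

definition harm :: "nat \<Rightarrow> nat \<Rightarrow> rat" where
  "harm n m = (\<Sum>k=1..n. 1 / (of_nat k) ^ m)"

text \<open>Congruence modulo p in the ring of rationals whose denominators are not
divisible by p: x is congruent to y iff x - y = a/b with integers a, b,
p not dividing b, and p dividing a.\<close>
definition rat_cong :: "rat \<Rightarrow> rat \<Rightarrow> int \<Rightarrow> bool" where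
  "rat_cong x y p \<longleftrightarrow> (\<exists>a b. b \<noteq> 0 \<and> \<not> p dvd b \<and> p dvd a \<and> x - y = of_int a / of_int b)"

end

theory Submission
  imports Defs
begin

text \<open>Both sides are in fact congruent to 0 modulo p. Let n = p - 1 and
H(a,b) = sum over k \<le> n of H_{k,b} / k^a (this is \<open>harm2 n a b\<close>). Expanding products of
harmonic sums expresses the two sums of the statement through H_{n,1}, ..., H_{n,4}, H(3,1),
H(2,2) and S = sum over k \<le> n of H(1,1)_k / k^2. The H_{p-1,m} with m \<le> 4 vanish mod p
because k \<mapsto> c k permutes the nonzero residues; H(1,3) vanishes by the reflection
k \<mapsto> p - k, and then so do H(3,1) and H(2,2). For S one uses the binomial transform
B_n f = sum over i = 1..n of (-1)^(i-1) (n choose i) f(i): its behaviour under division by i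
and partial summation gives B_n (H(1,1)_i / i^2) = H(1,3)_n, while
(-1)^(i-1) (p-1 choose i) \<equiv> -1 gives B_{p-1} f \<equiv> - sum f. Hence S \<equiv> -H(1,3) \<equiv> 0.\<close>

definition binomial_transform :: "nat \<Rightarrow> (nat \<Rightarrow> 'a::field_char_0) \<Rightarrow> 'a" where
  "binomial_transform n f = (\<Sum>j<n. (-1)^j * of_nat (n choose Suc j) * f (Suc j))"

lemma binomial_transform_0 [simp]: "binomial_transform 0 f = 0"
  by (simp add: binomial_transform_def)

lemma binomial_transform_Suc:
  "binomial_transform (Suc n) f =
     binomial_transform n f + (\<Sum>j<Suc n. (-1)^j * of_nat (n choose j) * f (Suc j))"
proof -
  have "(\<Sum>j<Suc n. (-1)^j * of_nat (n choose Suc j) * f (Suc j)) = binomial_transform n f"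
    by (simp add: binomial_transform_def)
  then show ?thesis
    by (simp add: binomial_transform_def algebra_simps sum.distrib del: sum.lessThan_Suc)
qed

lemma binomial_divide_Suc_eq:
  "x * of_nat (n choose j) * (y / of_nat (Suc j)) =
     x * of_nat (Suc n choose Suc j) * y / (of_nat (Suc n) :: 'a::field_char_0)"
proof -
  have "(of_nat (Suc n) * of_nat (n choose j) :: 'a) = of_nat (Suc n choose Suc j) * of_nat (Suc j)"
    by (metis Suc_times_binomial_eq of_nat_mult)
  then show ?thesis
    by (simp add: divide_simps del: of_nat_Suc binomial_Suc_Suc) (simp add: ac_simps)
qed

lemma binomial_transform_divide_of_nat:
  "binomial_transform n (\<lambda>i. f i / of_nat i) = (\<Sum>k=1..n. binomial_transform k f / of_nat k)"
proof (induction n)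
  case (Suc n)
  have "(\<Sum>j<Suc n. (-1)^j * of_nat (n choose j) * (f (Suc j) / of_nat (Suc j)))
      = binomial_transform (Suc n) f / of_nat (Suc n)"
    unfolding binomial_transform_def sum_divide_distrib
    by (intro sum.cong refl) (rule binomial_divide_Suc_eq)
  then show ?case
    using Suc.IH by (simp add: binomial_transform_Suc[of n "\<lambda>i. f i / of_nat i"])
qed simp

lemma sum_alternating_binomial_lessThan:
  "(\<Sum>j<l. (-1)^j * of_nat (Suc m choose Suc j) :: 'a::comm_ring_1) = 1 - (-1)^l * of_nat (m choose l)"
  by (induction l) (simp_all add: algebra_simps)

lemma binomial_transform_const_1: "n \<ge> 1 \<Longrightarrow> binomial_transform n (\<lambda>_. 1) = 1"
  by (cases n) (simp_all add: binomial_transform_def sum_alternating_binomial_lessThan[where l="Suc _"]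
                   del: binomial_Suc_Suc sum.lessThan_Suc)

lemma sum_mult_sum_atMost_swap:
  fixes c h :: "nat \<Rightarrow> 'a::comm_ring_1"
  shows "(\<Sum>j<n. c j * (\<Sum>l\<le>j. h l)) = (\<Sum>l<n. h l * (\<Sum>j=l..<n. c j))"
proof -
  have "(\<Sum>j<n. c j * (\<Sum>l\<le>j. h l)) = (\<Sum>j<n. \<Sum>l\<in>{l\<in>{..<n}. l \<le> j}. c j * h l)"
    by (intro sum.cong) (auto simp: sum_distrib_left intro!: sum.cong)
  also have "\<dots> = (\<Sum>l<n. \<Sum>j\<in>{j\<in>{..<n}. l \<le> j}. c j * h l)"
    by (rule sum.swap_restrict) auto
  also have "\<dots> = (\<Sum>l<n. h l * (\<Sum>j=l..<n. c j))"
    by (intro sum.cong) (auto simp: sum_distrib_left mult.commute intro!: sum.cong)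
  finally show ?thesis .
qed

lemma binomial_transform_partial_sums:
  "binomial_transform n (\<lambda>i. \<Sum>j=1..i. g j / of_nat j) = binomial_transform n g / of_nat n"
proof (cases n)
  case (Suc m)
  define c :: "nat \<Rightarrow> 'a" where "c j = (-1)^j * of_nat (Suc m choose Suc j)" for j
  have tail: "(\<Sum>j=l..<Suc m. c j) = (-1)^l * of_nat (m choose l)" if "l < Suc m" for l
  proof -
    have "(\<Sum>j<Suc m. c j) = (\<Sum>j<l. c j) + (\<Sum>j=l..<Suc m. c j)"
      using that by (simp add: lessThan_atLeast0 sum.atLeastLessThan_concat)
    then show ?thesis
      unfolding c_def sum_alternating_binomial_lessThan
      by (simp add: binomial_eq_0 del: binomial_Suc_Suc sum.lessThan_Suc sum.op_ivl_Suc)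
  qed
  have "binomial_transform n (\<lambda>i. \<Sum>j=1..i. g j / of_nat j)
      = (\<Sum>j<Suc m. c j * (\<Sum>l\<le>j. g (Suc l) / of_nat (Suc l)))"
    by (simp add: Suc binomial_transform_def c_def sum.atLeast1_atMost_eq lessThan_Suc_atMost
             del: of_nat_Suc binomial_Suc_Suc sum.lessThan_Suc)
  also have "\<dots> = (\<Sum>l<Suc m. (-1)^l * of_nat (m choose l) * (g (Suc l) / of_nat (Suc l)))"
    unfolding sum_mult_sum_atMost_swap by (intro sum.cong refl) (simp only: tail lessThan_iff mult.commute)
  also have "\<dots> = binomial_transform n g / of_nat n"
    unfolding Suc binomial_transform_def sum_divide_distrib
    by (intro sum.cong refl) (rule binomial_divide_Suc_eq)
  finally show ?thesis .
qed simp

lemma harm_0 [simp]: "harm 0 m = 0"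
  by (simp add: harm_def)

lemma harm_Suc: "harm (Suc n) m = harm n m + (1 / of_nat (Suc n))^m"
  by (simp add: harm_def power_one_over)

definition harm2 :: "nat \<Rightarrow> nat \<Rightarrow> nat \<Rightarrow> rat" where
  "harm2 n a b = (\<Sum>k=1..n. harm k b / of_nat k ^ a)"

lemma harm2_0 [simp]: "harm2 0 a b = 0"
  by (simp add: harm2_def)

lemma harm2_Suc: "harm2 (Suc n) a b = harm2 n a b + harm (Suc n) b * (1 / of_nat (Suc n))^a"
  by (simp add: harm2_def power_one_over)

lemma harm2_1_3_add_harm2_3_1: "harm2 n 1 3 + harm2 n 3 1 = harm n 1 * harm n 3 + harm n 4"
  by (induction n) (simp_all add: harm2_Suc harm_Suc algebra_simps power2_eq_square power3_eq_cube numeral_eq_Suc)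

lemma harm2_2_2: "2 * harm2 n 2 2 = (harm n 2)^2 + harm n 4"
  by (induction n) (simp_all add: harm2_Suc harm_Suc algebra_simps power2_eq_square numeral_eq_Suc)

lemma harm_1_squared: "(harm n 1)^2 = 2 * harm2 n 1 1 - harm n 2"
  by (induction n) (simp_all add: harm2_Suc harm_Suc algebra_simps power2_eq_square)

lemma sum_harm_squared_divide_squared:
  "(\<Sum>k=1..n. (harm k 1)^2 / of_nat k ^ 2) = 2 * (\<Sum>k=1..n. harm2 k 1 1 / of_nat k ^ 2) - harm2 n 2 2"
proof -
  have "(\<Sum>k=1..n. (harm k 1)^2 / of_nat k ^ 2) = (\<Sum>k=1..n. (2 * harm2 k 1 1 - harm k 2) / of_nat k ^ 2)"
    unfolding harm_1_squared ..
  then show ?thesis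
    unfolding harm2_def[of n 2 2] by (simp add: diff_divide_distrib sum_subtractf sum_distrib_left)
qed

lemma sum_harm_mult_harm_divide:
  "2 * (\<Sum>k=1..n. harm k 1 * harm k 2 / of_nat k) + (\<Sum>k=1..n. (harm k 1)^2 / of_nat k ^ 2) =
     (harm n 1)^2 * harm n 2 + 2 * harm2 n 3 1 + harm2 n 2 2 - harm n 4"
proof (induction n)
  case (Suc n)
  define x where "x = 1 / (of_nat (Suc n) :: rat)"
  have "(\<Sum>k=1..Suc n. harm k 1 * harm k 2 / of_nat k)
      = (\<Sum>k=1..n. harm k 1 * harm k 2 / of_nat k) + (harm n 1 + x) * (harm n 2 + x^2) * x"
    by (simp add: harm_Suc x_def)
  moreover have "(\<Sum>k=1..Suc n. (harm k 1)^2 / of_nat k ^ 2)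
      = (\<Sum>k=1..n. (harm k 1)^2 / of_nat k ^ 2) + (harm n 1 + x)^2 * x^2"
    by (simp add: harm_Suc x_def power_one_over)
  ultimately show ?case
    using Suc.IH unfolding harm2_Suc harm_Suc[of n] x_def[symmetric]
    by (simp add: algebra_simps power2_eq_square power3_eq_cube numeral_eq_Suc)
qed simp

lemma sum_harm_pred_divide: "(\<Sum>k=1..n. harm (k - 1) m / of_nat k) = harm2 n 1 m - harm n (Suc m)"
  by (induction n) (simp_all add: harm2_Suc harm_Suc algebra_simps)

lemma binomial_transform_harm: "binomial_transform n (\<lambda>i. harm i 1) = 1 / of_nat n"
proof (cases "n = 0")
  case False
  then show ?thesis
    using binomial_transform_partial_sums[of n "\<lambda>_. 1"]
    by (simp add: harm_def binomial_transform_const_1)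
qed simp

lemma binomial_transform_harm2_1_1: "binomial_transform n (\<lambda>i. harm2 i 1 1) = 1 / of_nat n ^ 2"
proof -
  have "binomial_transform n (\<lambda>i. harm2 i 1 1) = binomial_transform n (\<lambda>i. harm i 1) / of_nat n"
    using binomial_transform_partial_sums[of n "\<lambda>i. harm i 1"] by (simp add: harm2_def)
  then show ?thesis
    unfolding binomial_transform_harm by (simp add: power2_eq_square)
qed

lemma binomial_transform_harm2_1_1_divide_squared:
  "binomial_transform n (\<lambda>i. harm2 i 1 1 / of_nat i ^ 2) = harm2 n 1 3"
proof -
  have "binomial_transform n (\<lambda>i. harm2 i 1 1 / of_nat i ^ 2)
      = binomial_transform n (\<lambda>i. harm2 i 1 1 / of_nat i / of_nat i)"
    by (simp add: power2_eq_square)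
  also have "\<dots> = (\<Sum>k=1..n. (\<Sum>l=1..k. binomial_transform l (\<lambda>i. harm2 i 1 1) / of_nat l) / of_nat k)"
    unfolding binomial_transform_divide_of_nat ..
  also have "\<dots> = harm2 n 1 3"
    unfolding binomial_transform_harm2_1_1 by (simp add: harm2_def harm_def power2_eq_square power3_eq_cube)
  finally show ?thesis .
qed

definition p_integral :: "nat \<Rightarrow> rat \<Rightarrow> bool" where
  "p_integral p x \<longleftrightarrow> (\<exists>a b. b \<noteq> 0 \<and> \<not> int p dvd b \<and> x = of_int a / of_int b)"

definition p_divisible :: "nat \<Rightarrow> rat \<Rightarrow> bool" where
  "p_divisible p x \<longleftrightarrow> p_integral p (x / of_nat p)"

context
  fixes p :: nat
  assumes prime: "prime p"
begin

lemma prime_int: "prime (int p)"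
  using prime by simp

lemma p_pos: "p > 0"
  using prime prime_gt_0_nat by blast

lemma rat_cong_iff_p_divisible: "rat_cong x y (int p) \<longleftrightarrow> p_divisible p (x - y)"
proof
  assume "rat_cong x y (int p)"
  then obtain a b where "b \<noteq> 0" "\<not> int p dvd b" "int p dvd a" "x - y = of_int a / of_int b"
    unfolding rat_cong_def by blast
  then show "p_divisible p (x - y)"
    unfolding p_divisible_def p_integral_def using p_pos
    by (intro exI[of _ "a div int p"] exI[of _ b]) (auto elim: dvdE)
next
  assume "p_divisible p (x - y)"
  then obtain a b where "b \<noteq> 0" "\<not> int p dvd b" "(x - y) / of_nat p = of_int a / of_int b"
    unfolding p_divisible_def p_integral_def by blast
  then show "rat_cong x y (int p)"
    unfolding rat_cong_def using p_pos
    by (intro exI[of _ "int p * a"] exI[of _ b]) (auto simp: field_simps)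
qed

lemma p_not_dvd_mult: "\<not> int p dvd b \<Longrightarrow> \<not> int p dvd d \<Longrightarrow> \<not> int p dvd (b * d)"
  using prime_int prime_dvd_mult_iff by blast

lemma p_integral_of_int [simp]: "p_integral p (of_int a)"
  unfolding p_integral_def using prime
  by (intro exI[of _ a] exI[of _ 1]) (auto simp: prime_gt_1_nat)

lemma p_integral_of_nat [simp]: "p_integral p (of_nat a)"
  using p_integral_of_int[of "int a"] by simp

lemma p_integral_numeral [simp]: "p_integral p (numeral n)"
  using p_integral_of_int[of "numeral n"] by simp

lemma p_integral_0 [simp]: "p_integral p 0" and p_integral_1 [simp]: "p_integral p 1"
  using p_integral_of_int[of 0] p_integral_of_int[of 1] by simp_all

lemma p_integral_add [intro]:
  assumes "p_integral p x" "p_integral p y" shows "p_integral p (x + y)"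
proof -
  obtain a b c d where "b \<noteq> 0" "\<not> int p dvd b" "x = of_int a / of_int b"
    "d \<noteq> 0" "\<not> int p dvd d" "y = of_int c / of_int d"
    using assms unfolding p_integral_def by blast
  then show ?thesis
    unfolding p_integral_def
    by (intro exI[of _ "a * d + c * b"] exI[of _ "b * d"]) (auto simp: p_not_dvd_mult field_simps)
qed

lemma p_integral_mult [intro]:
  assumes "p_integral p x" "p_integral p y" shows "p_integral p (x * y)"
proof -
  obtain a b c d where "b \<noteq> 0" "\<not> int p dvd b" "x = of_int a / of_int b"
    "d \<noteq> 0" "\<not> int p dvd d" "y = of_int c / of_int d"
    using assms unfolding p_integral_def by blast
  then show ?thesis
    unfolding p_integral_def
    by (intro exI[of _ "a * c"] exI[of _ "b * d"]) (auto simp: p_not_dvd_mult)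
qed

lemma p_integral_power [intro]: "p_integral p x \<Longrightarrow> p_integral p (x ^ n)"
  by (induction n) auto

lemma p_integral_sum [intro]:
  "(\<And>i. i \<in> A \<Longrightarrow> p_integral p (f i)) \<Longrightarrow> p_integral p (\<Sum>i\<in>A. f i)"
  by (induction A rule: infinite_finite_induct) auto

lemma p_integral_inverse_of_int: "\<not> int p dvd c \<Longrightarrow> p_integral p (1 / of_int c)"
  unfolding p_integral_def by (intro exI[of _ 1] exI[of _ c]) auto

lemma p_integral_inverse_of_nat:
  assumes "1 \<le> k" "k < p" shows "p_integral p (1 / of_nat k)"
proof -
  have "\<not> int p dvd int k"
    using assms by (auto dest: zdvd_imp_le)
  then show ?thesis
    using p_integral_inverse_of_int[of "int k"] by simp
qed

lemma p_integral_divide_of_nat: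
  "p_integral p x \<Longrightarrow> 1 \<le> k \<Longrightarrow> k < p \<Longrightarrow> p_integral p (x / of_nat k)"
  using p_integral_mult[OF _ p_integral_inverse_of_nat] by (metis divide_inverse inverse_eq_divide)

lemma p_integral_harm: "n < p \<Longrightarrow> p_integral p (harm n m)"
  unfolding harm_def power_one_over [symmetric]
  by (intro p_integral_sum p_integral_power p_integral_inverse_of_nat) auto

lemma p_integral_harm2:
  assumes "n < p" shows "p_integral p (harm2 n a b)"
  unfolding harm2_def
proof (rule p_integral_sum)
  fix k assume "k \<in> {1..n}"
  then have "p_integral p (harm k b * (1 / of_nat k) ^ a)"
    using assms by (intro p_integral_mult p_integral_power p_integral_harm p_integral_inverse_of_nat) auto
  then show "p_integral p (harm k b / of_nat k ^ a)"
    by (simp add: power_one_over)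
qed

lemma p_divisible_0 [simp]: "p_divisible p 0"
  by (simp add: p_divisible_def)

lemma p_divisible_of_int: "int p dvd a \<Longrightarrow> p_divisible p (of_int a)"
  unfolding p_divisible_def using p_pos by (auto elim: dvdE)

lemma p_divisible_add [intro]: "p_divisible p x \<Longrightarrow> p_divisible p y \<Longrightarrow> p_divisible p (x + y)"
  unfolding p_divisible_def by (metis add_divide_distrib p_integral_add)

lemma p_divisible_mult [intro]: "p_integral p x \<Longrightarrow> p_divisible p y \<Longrightarrow> p_divisible p (x * y)"
  unfolding p_divisible_def by (metis p_integral_mult times_divide_eq_right)

lemma p_divisible_mult_right [intro]: "p_divisible p x \<Longrightarrow> p_integral p y \<Longrightarrow> p_divisible p (x * y)"
  using p_divisible_mult[of y x] by (simp add: mult.commute)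

lemma p_divisible_uminus [intro]: "p_divisible p x \<Longrightarrow> p_divisible p (- x)"
  using p_divisible_mult[OF p_integral_of_int[of "-1"], of x] by simp

lemma p_divisible_diff [intro]: "p_divisible p x \<Longrightarrow> p_divisible p y \<Longrightarrow> p_divisible p (x - y)"
  using p_divisible_add[of x "- y"] by auto

lemma p_divisible_sum [intro]:
  "(\<And>i. i \<in> A \<Longrightarrow> p_divisible p (f i)) \<Longrightarrow> p_divisible p (\<Sum>i\<in>A. f i)"
  by (induction A rule: infinite_finite_induct) auto

lemma p_divisible_cancel:
  assumes "p_divisible p (of_int c * x)" "\<not> int p dvd c" shows "p_divisible p x"
proof -
  have "x = 1 / of_int c * (of_int c * x)"
    using assms(2) by (cases "c = 0") auto
  then show ?thesis
    using p_divisible_mult[OF p_integral_inverse_of_int[OF assms(2)] assms(1)] by simp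
qed

lemma p_divisible_cancel_2:
  assumes "p_divisible p (2 * x)" "p \<noteq> 2" shows "p_divisible p x"
proof -
  have "\<not> p dvd 2"
    using assms(2) prime primes_dvd_imp_eq two_is_prime_nat by blast
  then have "\<not> int p dvd 2"
    by presburger
  then show ?thesis
    using p_divisible_cancel[of 2 x] assms(1) by simp
qed

lemma p_divisible_inverse_diff:
  assumes a: "\<not> int p dvd a" and ab: "[a = b] (mod int p)"
  shows "p_divisible p (1 / of_int a - 1 / of_int b)"
proof -
  have b: "\<not> int p dvd b"
    using a ab cong_dvd_iff by blast
  have "1 / of_int a - 1 / of_int b = of_int (b - a) * (1 / of_int a) * (1 / of_int b :: rat)"
    using a b by (cases "a = 0 \<or> b = 0") (auto simp: field_simps)
  moreover have "int p dvd b - a"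
    using ab by (simp add: cong_iff_dvd_diff dvd_diff_commute)
  ultimately show ?thesis
    using p_integral_inverse_of_int[OF a] p_integral_inverse_of_int[OF b]
    by (metis p_divisible_mult_right p_divisible_of_int)
qed

lemma p_divisible_harm_pred_prime:
  fixes c :: int
  assumes c: "\<not> int p dvd c" and cm: "\<not> int p dvd c ^ m - 1"
  shows "p_divisible p (harm (p - 1) m)"
proof -
  define H where "H = harm (p - 1) m"
  have "coprime c (int p)"
    using prime_imp_coprime[OF prime_int c] by (simp add: coprime_commute)
  then have bij: "bij_betw (\<lambda>k. c * k mod int p) {1..<int p} {1..<int p}"
    by (rule bij_betw_int_remainders_mult)
  have H_int: "H = (\<Sum>k\<in>{1..<int p}. 1 / of_int k ^ m)"
    unfolding H_def harm_def using p_pos by (intro sum.reindex_bij_witness[where i=nat and j=int]) auto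
  also have "\<dots> = (\<Sum>k\<in>{1..<int p}. 1 / of_int (c * k mod int p) ^ m)"
    by (rule sum.reindex_bij_betw[OF bij, symmetric])
  finally have H_perm: "H = (\<Sum>k\<in>{1..<int p}. 1 / of_int ((c * k mod int p) ^ m))"
    by simp
  have "p_divisible p (\<Sum>k\<in>{1..<int p}. 1 / of_int ((c * k mod int p) ^ m) - 1 / of_int ((c * k) ^ m))"
  proof (rule p_divisible_sum)
    fix k assume "k \<in> {1..<int p}"
    then have "c * k mod int p \<in> {1..<int p}"
      using bij bij_betwE by blast
    then have "\<not> int p dvd c * k mod int p"
      by (auto dest: zdvd_imp_le)
    then have "\<not> int p dvd (c * k mod int p) ^ m"
      using prime_dvd_power[OF prime_int] by blast
    moreover have "[(c * k mod int p) ^ m = (c * k) ^ m] (mod int p)"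
      by (intro cong_pow) (simp add: cong_def)
    ultimately show "p_divisible p (1 / of_int ((c * k mod int p) ^ m) - 1 / of_int ((c * k) ^ m))"
      by (rule p_divisible_inverse_diff)
  qed
  also have "(\<Sum>k\<in>{1..<int p}. 1 / of_int ((c * k mod int p) ^ m) - 1 / of_int ((c * k) ^ m))
      = H - H / of_int c ^ m"
    unfolding sum_subtractf H_perm[symmetric] H_int
    by (simp add: sum_divide_distrib power_mult_distrib mult.commute)
  finally have "p_divisible p (of_int c ^ m * (H - H / of_int c ^ m))"
    by (intro p_divisible_mult) auto
  moreover have "of_int c ^ m * (H - H / of_int c ^ m) = of_int (c ^ m - 1) * H"
    using c by (cases "c = 0") (auto simp: field_simps)
  ultimately show ?thesis
    unfolding H_def using p_divisible_cancel cm by metis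
qed

lemma p_divisible_harm_pred_prime_odd:
  assumes "odd m" "p \<noteq> 2"
  shows "p_divisible p (harm (p - 1) m)"
proof (rule p_divisible_harm_pred_prime[of "-1"])
  show "\<not> int p dvd -1"
    using prime_gt_1_nat[OF prime] by simp
  have "\<not> p dvd 2"
    using assms(2) prime primes_dvd_imp_eq two_is_prime_nat by blast
  then show "\<not> int p dvd (-1) ^ m - 1"
    using assms(1) by simp presburger
qed

lemma p_divisible_harm_pred_prime_le_4:
  assumes "p \<ge> 7" "m \<in> {1, 2, 3, 4}"
  shows "p_divisible p (harm (p - 1) m)"
proof -
  have small: "\<not> int p dvd d" if "d \<noteq> 0" "\<bar>d\<bar> < 7" for d :: int
    using assms(1) dvd_imp_le_int[OF that(1)] that(2) by fastforce
  consider "odd m" | "m = 2" | "m = 4"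
    using assms(2) by auto
  then show ?thesis
  proof cases
    case 1
    then show ?thesis
      using assms(1) by (intro p_divisible_harm_pred_prime_odd) auto
  next
    case 2
    then show ?thesis
      using small[of 2] small[of 3] by (intro p_divisible_harm_pred_prime[of 2]) auto
  next
    case 3
    have "\<not> int p dvd 3 * 5"
      unfolding prime_dvd_mult_iff[OF prime_int] using small[of 3] small[of 5] by simp
    then show ?thesis
      using 3 small[of 2] by (intro p_divisible_harm_pred_prime[of 2]) auto
  qed
qed

lemma alternating_binomial_pred_prime_cong:
  "i \<le> p - 1 \<Longrightarrow> [(-1)^i * int (p - 1 choose i) = 1] (mod int p)"
proof (induction i)
  case (Suc i)
  have "p = Suc (p - 1)"
    using p_pos by simp
  then have "p choose Suc i = (p - 1 choose i) + (p - 1 choose Suc i)"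
    by (metis binomial_Suc_Suc)
  moreover have "p dvd p choose Suc i"
    using Suc.prems prime p_pos by (intro dvd_choose_prime) auto
  ultimately have "[int (p - 1 choose Suc i) = - int (p - 1 choose i)] (mod int p)"
    by (simp add: cong_iff_dvd_diff flip: of_nat_add) (metis add.commute int_dvd_int_iff of_nat_add)
  then have "[(-1)^Suc i * int (p - 1 choose Suc i) = (-1)^i * int (p - 1 choose i)] (mod int p)"
    using cong_mult[OF cong_refl[of "(-1)^Suc i"]] by fastforce
  then show ?case
    using Suc by (metis Suc_leD cong_trans)
qed simp

lemma p_divisible_binomial_transform_add_sum:
  assumes "\<And>k. 1 \<le> k \<Longrightarrow> k \<le> p - 1 \<Longrightarrow> p_integral p (f k)"
  shows "p_divisible p (binomial_transform (p - 1) f + (\<Sum>k=1..p-1. f k))"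
proof -
  have "binomial_transform (p - 1) f + (\<Sum>k=1..p-1. f k)
      = (\<Sum>j<p-1. of_int ((-1)^j * int (p - 1 choose Suc j) + 1) * f (Suc j))"
    unfolding binomial_transform_def by (simp add: sum.atLeast1_atMost_eq sum.distrib algebra_simps)
  also have "p_divisible p \<dots>"
  proof (intro p_divisible_sum p_divisible_mult_right p_divisible_of_int)
    fix j assume j: "j \<in> {..<p-1}"
    then have "[(-1)^Suc j * int (p - 1 choose Suc j) = 1] (mod int p)"
      by (intro alternating_binomial_pred_prime_cong) auto
    then show "int p dvd (-1)^j * int (p - 1 choose Suc j) + 1"
      by (simp add: cong_iff_dvd_diff dvd_diff_commute add.commute)
    show "p_integral p (f (Suc j))"
      using j by (intro assms) auto
  qed
  finally show ?thesis .
qed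

lemma p_divisible_inverse_power_add_reflect:
  assumes "1 \<le> i" "i < p" "odd m"
  shows "p_divisible p (1 / of_nat i ^ m + 1 / of_nat (p - i) ^ m)"
proof -
  have "\<not> int p dvd int i"
    using assms by (auto dest: zdvd_imp_le)
  then have "\<not> int p dvd int i ^ m"
    using prime_dvd_power[OF prime_int] by blast
  moreover have "[int i ^ m = (int i - int p) ^ m] (mod int p)"
    by (intro cong_pow) (simp add: cong_iff_dvd_diff)
  ultimately have "p_divisible p (1 / of_int (int i ^ m) - 1 / of_int ((int i - int p) ^ m))"
    by (rule p_divisible_inverse_diff)
  moreover have "(int i - int p) ^ m = - (int (p - i) ^ m)"
    using assms by (simp add: of_nat_diff power_minus_odd[symmetric])
  ultimately show ?thesis
    by simp
qed

lemma p_divisible_harm_add_reflect: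
  assumes "odd m" "1 \<le> k" "k \<le> p - 1"
  shows "p_divisible p (harm (p - k) m + (harm (p - 1) m - harm (k - 1) m))"
proof -
  have "{1..p-1} = {1..k-1} \<union> {k..p-1}" "{1..k-1} \<inter> {k..p-1} = {}"
    using assms by auto
  then have "harm (p - 1) m - harm (k - 1) m = (\<Sum>j=k..p-1. 1 / of_nat j ^ m)"
    unfolding harm_def by (simp add: sum.union_disjoint)
  also have "\<dots> = (\<Sum>i=1..p-k. 1 / of_nat (p - i) ^ m)"
    using assms by (intro sum.reindex_bij_witness[where i="\<lambda>i. p - i" and j="\<lambda>i. p - i"]) auto
  finally have "harm (p - k) m + (harm (p - 1) m - harm (k - 1) m)
      = (\<Sum>i=1..p-k. 1 / of_nat i ^ m + 1 / of_nat (p - i) ^ m)"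
    unfolding harm_def[of "p - k"] by (simp add: sum.distrib)
  also have "p_divisible p \<dots>"
    using assms by (intro p_divisible_sum p_divisible_inverse_power_add_reflect) auto
  finally show ?thesis .
qed

lemma p_divisible_harm2_1_odd:
  assumes "odd m" "p \<noteq> 2"
    and "p_divisible p (harm (p - 1) m)" "p_divisible p (harm (p - 1) (Suc m))"
  shows "p_divisible p (harm2 (p - 1) 1 m)"
proof -
  have summand: "p_divisible p (harm (p - k) m / of_nat (p - k) + harm (k - 1) m / of_nat k)"
    if k: "k \<in> {1..p-1}" for k
  proof -
    have "p_divisible p (harm (p - k) m + (harm (p - 1) m - harm (k - 1) m) - harm (p - 1) m)"
      using assms(1,3) k by (intro p_divisible_diff p_divisible_harm_add_reflect) auto
    then have "p_divisible p (harm (p - k) m - harm (k - 1) m)"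
      by simp
    moreover have "p_divisible p (1 / of_nat (p - k) + 1 / of_nat k)"
      using p_divisible_inverse_power_add_reflect[of k 1] k p_pos by (simp only: power_one add.commute) auto
    moreover have "p_integral p (1 / of_nat (p - k))" "p_integral p (harm (k - 1) m)"
      using k p_pos by (auto intro: p_integral_inverse_of_nat p_integral_harm)
    ultimately have "p_divisible p ((harm (p - k) m - harm (k - 1) m) * (1 / of_nat (p - k))
        + harm (k - 1) m * (1 / of_nat (p - k) + 1 / of_nat k))"
      by blast
    then show ?thesis
      by (simp add: algebra_simps)
  qed
  have "harm2 (p - 1) 1 m = (\<Sum>k=1..p-1. harm (p - k) m / of_nat (p - k))"
    unfolding harm2_def using sum.atLeastAtMost_rev[of "\<lambda>k. harm k m / of_nat k" 1 "p - 1"] p_pos by simp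
  then have "2 * harm2 (p - 1) 1 m - harm (p - 1) (Suc m)
      = (\<Sum>k=1..p-1. harm (p - k) m / of_nat (p - k) + harm (k - 1) m / of_nat k)"
    using sum_harm_pred_divide[where n="p - 1" and m=m] by (simp add: sum.distrib)
  then have "p_divisible p (2 * harm2 (p - 1) 1 m - harm (p - 1) (Suc m))"
    using summand by auto
  then show ?thesis
    using p_divisible_add[OF _ assms(4)] p_divisible_cancel_2 assms(2) by fastforce
qed

lemma p_divisible_harm2_1_3:
  assumes "p \<ge> 7" shows "p_divisible p (harm2 (p - 1) 1 3)"
proof (rule p_divisible_harm2_1_odd)
  show "p_divisible p (harm (p - 1) (Suc 3))"
    using assms p_divisible_harm_pred_prime_le_4[of 4] by simp
qed (use assms p_divisible_harm_pred_prime_le_4[of 3] in auto)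

lemma p_divisible_harm2_2_2:
  assumes "p \<ge> 7" shows "p_divisible p (harm2 (p - 1) 2 2)"
proof (rule p_divisible_cancel_2)
  have "p_divisible p (harm (p - 1) 2 * harm (p - 1) 2 + harm (p - 1) 4)"
    using assms p_divisible_harm_pred_prime_le_4[of 2] p_divisible_harm_pred_prime_le_4[of 4] p_pos
    by (intro p_divisible_add p_divisible_mult p_integral_harm) auto
  then show "p_divisible p (2 * harm2 (p - 1) 2 2)"
    by (simp add: harm2_2_2 power2_eq_square)
qed (use assms in simp)

lemma p_divisible_sum_harm2_1_1_divide_squared:
  assumes "p \<ge> 7" shows "p_divisible p (\<Sum>k=1..p-1. harm2 k 1 1 / of_nat k ^ 2)"
proof -
  have "p_divisible p (binomial_transform (p - 1) (\<lambda>i. harm2 i 1 1 / of_nat i ^ 2)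
      + (\<Sum>k=1..p-1. harm2 k 1 1 / of_nat k ^ 2))"
  proof (rule p_divisible_binomial_transform_add_sum)
    fix k assume "1 \<le> k" "k \<le> p - 1"
    then have "p_integral p (harm2 k 1 1 / of_nat k / of_nat k)"
      using p_pos by (intro p_integral_divide_of_nat p_integral_harm2) auto
    then show "p_integral p (harm2 k 1 1 / of_nat k ^ 2)"
      by (simp add: power2_eq_square)
  qed
  then have "p_divisible p (harm2 (p - 1) 1 3 + (\<Sum>k=1..p-1. harm2 k 1 1 / of_nat k ^ 2))"
    unfolding binomial_transform_harm2_1_1_divide_squared .
  then show ?thesis
    using p_divisible_diff[OF _ p_divisible_harm2_1_3[OF assms]] by fastforce
qed

lemma p_divisible_sum_harm_squared_divide_squared:
  assumes "p \<ge> 7" shows "p_divisible p (\<Sum>k=1..p-1. (harm k 1)^2 / of_nat k ^ 2)"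
  unfolding sum_harm_squared_divide_squared
  using p_divisible_sum_harm2_1_1_divide_squared[OF assms] p_divisible_harm2_2_2[OF assms]
  by (intro p_divisible_diff p_divisible_mult) auto

lemma p_divisible_harm2_3_1:
  assumes "p \<ge> 7" shows "p_divisible p (harm2 (p - 1) 3 1)"
proof -
  let ?n = "p - 1"
  have "p_divisible p (harm ?n 1 * harm ?n 3 + harm ?n 4 - harm2 ?n 1 3)"
    using assms p_divisible_harm_pred_prime_le_4[of 1] p_divisible_harm_pred_prime_le_4[of 4]
      p_divisible_harm2_1_3[OF assms] p_pos
    by (intro p_divisible_diff p_divisible_add p_divisible_mult_right p_integral_harm) auto
  moreover have "harm2 ?n 3 1 = harm ?n 1 * harm ?n 3 + harm ?n 4 - harm2 ?n 1 3"
    using harm2_1_3_add_harm2_3_1[of ?n] by linarith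
  ultimately show ?thesis
    by simp
qed

lemma p_divisible_sum_harm_mult_harm_divide:
  assumes "p \<ge> 7" shows "p_divisible p (\<Sum>k=1..p-1. harm k 1 * harm k 2 / of_nat k)"
proof (rule p_divisible_cancel_2)
  let ?n = "p - 1"
  have "p_divisible p ((harm ?n 1)^2 * harm ?n 2 + 2 * harm2 ?n 3 1 + harm2 ?n 2 2 - harm ?n 4
      - (\<Sum>k=1..?n. (harm k 1)^2 / of_nat k ^ 2))"
    using assms p_divisible_harm_pred_prime_le_4[of 2] p_divisible_harm_pred_prime_le_4[of 4]
      p_divisible_harm2_3_1[OF assms] p_divisible_harm2_2_2[OF assms]
      p_divisible_sum_harm_squared_divide_squared[OF assms] p_pos
    by (intro p_divisible_diff p_divisible_add p_divisible_mult p_divisible_mult_right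
        p_integral_harm p_integral_power p_integral_numeral) auto
  moreover have "2 * (\<Sum>k=1..?n. harm k 1 * harm k 2 / of_nat k)
      = (harm ?n 1)^2 * harm ?n 2 + 2 * harm2 ?n 3 1 + harm2 ?n 2 2 - harm ?n 4
        - (\<Sum>k=1..?n. (harm k 1)^2 / of_nat k ^ 2)"
    using sum_harm_mult_harm_divide[of ?n] by linarith
  ultimately show "p_divisible p (2 * (\<Sum>k=1..?n. harm k 1 * harm k 2 / of_nat k))"
    by simp
qed (use assms in simp)

end

theorem lemma2p6:
  fixes p :: nat
  assumes "prime p" and "p \<ge> 7"
  shows "rat_cong (\<Sum>k=1..p-1. harm k 1 * harm k 2 / of_nat k)
                  (- (3/2) * (\<Sum>k=1..p-1. (harm k 1)^2 / (of_nat k)^2)) (int p)"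
proof -
  have "p_integral p (of_nat 3 / of_nat 2)"
    using assms by (intro p_integral_divide_of_nat p_integral_of_nat) auto
  then have "p_divisible p ((\<Sum>k=1..p-1. harm k 1 * harm k 2 / of_nat k)
      + 3 / 2 * (\<Sum>k=1..p-1. (harm k 1)^2 / (of_nat k)^2))"
    using assms p_divisible_sum_harm_mult_harm_divide p_divisible_sum_harm_squared_divide_squared
    by (intro p_divisible_add p_divisible_mult) simp_all
  then show ?thesis
    using assms(1) by (simp add: rat_cong_iff_p_divisible)
qed


end
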